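(* Let $V$ be a set and $o$ a partial 3-order on $V$ with the $(4,3)$ property. Then there are no distinct $A,B,C,D\in V$ with $o(ABD)=o(BCD)=o(CAD)=1$.
   Context: A partial orientation on $V$ is a map $o$ from ordered triples of distinct elements of $V$ to $\{+1,0,-1\}$ with $o(uvw)=o(wuv)=o(vwu)=-o(uwv)=-o(vuw)=-o(wvu)$. It is a partial 3-order if it satisfies the interiority condition: for all distinct $a,b,c,d$, $o(abd)=o(bcd)=o(cad)=1$ implies $o(abc)=1$. It has the $(4,3)$ property if among any four distinct elements of $V$ there are three, $x,y,z$, with $o(xyz)=0$. *)

theory Defs
  imports Main
begin

text \<open>We represent it
as a total function 'a => 'a => 'a => int; only its values on triples of
distinct elements of V are constrained/used.\<close>

definition partial_orientation :: "'a set \<Rightarrow> ('a \<Rightarrow> 'a \<Rightarrow> 'a \<Rightarrow> int) \<Rightarrow> bool" where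
  "partial_orientation V ori \<longleftrightarrow>
    (\<forall>u\<in>V. \<forall>v\<in>V. \<forall>w\<in>V. distinct [u, v, w] \<longrightarrow>
       ori u v w \<in> {1, 0, -1} \<and>
       ori u v w = ori w u v \<and> ori u v w = ori v w u \<and>
       ori u v w = - ori u w v \<and> ori u v w = - ori v u w \<and> ori u v w = - ori w v u)"

definition partial_3order :: "'a set \<Rightarrow> ('a \<Rightarrow> 'a \<Rightarrow> 'a \<Rightarrow> int) \<Rightarrow> bool" where
  "partial_3order V ori \<longleftrightarrow> partial_orientation V ori \<and>
    (\<forall>a\<in>V. \<forall>b\<in>V. \<forall>c\<in>V. \<forall>d\<in>V. distinct [a, b, c, d] \<longrightarrow>
       ori a b d = 1 \<longrightarrow> ori b c d = 1 \<longrightarrow> ori c a d = 1 \<longrightarrow> ori a b c = 1)"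

definition prop_4_3 :: "'a set \<Rightarrow> ('a \<Rightarrow> 'a \<Rightarrow> 'a \<Rightarrow> int) \<Rightarrow> bool" where
  "prop_4_3 V ori \<longleftrightarrow>
    (\<forall>S\<subseteq>V. card S = 4 \<longrightarrow>
       (\<exists>x\<in>S. \<exists>y\<in>S. \<exists>z\<in>S. distinct [x, y, z] \<and> ori x y z = 0))"

end

theory Submission
  imports Defs
begin

text \<open>By interiority the remaining triple is oriented as well, ori A B C = 1, so all
four triples of the quadruple A, B, C, D are nonzero, which the (4,3) property forbids.
Since an orientation only changes sign under permutations, it suffices to look at each
triple in one fixed order.\<close>

lemma partial_orientation_zero_iff_perm:
  assumes "partial_orientation V ori"
    and "u \<in> V" "v \<in> V" "w \<in> V" "distinct [u, v, w]"
    and "{x, y, z} = {u, v, w}" "distinct [x, y, z]"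
  shows "ori x y z = 0 \<longleftrightarrow> ori u v w = 0"
proof -
  have alt: "ori u v w = ori w u v \<and> ori u v w = ori v w u \<and>
      ori u v w = - ori u w v \<and> ori u v w = - ori v u w \<and> ori u v w = - ori w v u"
    using assms(1-5) unfolding partial_orientation_def by blast
  have "(x, y, z) \<in> {(u, v, w), (w, u, v), (v, w, u), (u, w, v), (v, u, w), (w, v, u)}"
    using assms(5-7) by (simp add: set_eq_iff) metis
  then show ?thesis
    using alt by auto
qed

lemma prop_4_3_some_triple_zero:
  assumes "partial_orientation V ori" "prop_4_3 V ori"
    and "a \<in> V" "b \<in> V" "c \<in> V" "d \<in> V" "distinct [a, b, c, d]"
  shows "ori a b c = 0 \<or> ori a b d = 0 \<or> ori b c d = 0 \<or> ori c a d = 0"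
proof -
  have "{a, b, c, d} \<subseteq> V" "card {a, b, c, d} = 4"
    using assms(3-7) by simp_all
  then obtain x y z where xyz: "x \<in> {a, b, c, d}" "y \<in> {a, b, c, d}" "z \<in> {a, b, c, d}"
      and distinct: "distinct [x, y, z]" and zero: "ori x y z = 0"
    using assms(2) unfolding prop_4_3_def by (meson subsetD)
  have zero_iff: "ori x y z = 0 \<longleftrightarrow> ori u v w = 0"
    if "u \<in> V" "v \<in> V" "w \<in> V" "distinct [u, v, w]" "{x, y, z} = {u, v, w}" for u v w
    using partial_orientation_zero_iff_perm[OF assms(1) that distinct] .
  have "{x, y, z} = {a, b, c} \<or> {x, y, z} = {a, b, d} \<or> {x, y, z} = {b, c, d} \<or> {x, y, z} = {c, a, d}"
    using xyz distinct by (elim insertE emptyE) (simp_all add: insert_commute)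
  moreover have "distinct [a, b, c]" "distinct [a, b, d]" "distinct [b, c, d]" "distinct [c, a, d]"
    using assms(7) by auto
  ultimately show ?thesis
    using zero_iff zero assms(3-6) by (elim disjE) simp_all
qed

theorem lemma5:
  fixes V :: "'a set" and ori :: "'a \<Rightarrow> 'a \<Rightarrow> 'a \<Rightarrow> int"
  assumes "partial_3order V ori" and "prop_4_3 V ori"
  shows "\<not> (\<exists>A\<in>V. \<exists>B\<in>V. \<exists>C\<in>V. \<exists>D\<in>V. distinct [A, B, C, D] \<and>
              ori A B D = 1 \<and> ori B C D = 1 \<and> ori C A D = 1)"
proof
  assume "\<exists>A\<in>V. \<exists>B\<in>V. \<exists>C\<in>V. \<exists>D\<in>V. distinct [A, B, C, D] \<and>
              ori A B D = 1 \<and> ori B C D = 1 \<and> ori C A D = 1"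
  then obtain A B C D where V: "A \<in> V" "B \<in> V" "C \<in> V" "D \<in> V"
    and distinct: "distinct [A, B, C, D]"
    and oriented: "ori A B D = 1" "ori B C D = 1" "ori C A D = 1"
    by blast
  have "ori A B C = 1"
    using assms(1) V distinct oriented unfolding partial_3order_def by blast
  moreover have "partial_orientation V ori"
    using assms(1) unfolding partial_3order_def by blast
  ultimately show False
    using prop_4_3_some_triple_zero[OF _ assms(2) V distinct] oriented by simp
qed

end
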